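(* Let $P_{(\cdot)}$ be an irreducible $G$-stochastic function on $\mathcal A\subset\mathbb N_+$, $G$ finite, with $\gcd(\mathcal A)=1$. Then all states have the same period: $d_i=\hat d$ for all $i\in G$, for some $\hat d\in\mathbb N_+$. Moreover there is a partition $\{G_h: h=0,\dots,\hat d-1\}$ of $G$ such that for every word $\mathbf b\in\mathcal A^*$, $P_{\mathbf b}(i,j)>0$ and $i\in G_h$ imply $j\in G_{h+s(\mathbf b)}$, indices taken modulo $\hat d$.
   Context: A $G$-stochastic function is a map $k\mapsto P_{(k)}$ from $\mathcal A$ to stochastic matrices on $G$. $\mathcal A^*=\bigcup_{n\ge1}\mathcal A^n$; for $\mathbf a=(a_1,\dots,a_n)$, $P_{\mathbf a}=P_{(a_n)}\cdots P_{(a_1)}$ and the depth is $s(\mathbf a)=\sum_i a_i$. $P_{(\cdot)}$ is irreducible if for all $i,j\in G$ there is $\mathbf a\in\mathcal A^*$ with $P_{\mathbf a}(i,j)>0$. The period of $i\in G$ is $d_i=\gcd\, s(\mathcal A_i^* )$, where $\mathcal A_i^*=\{\mathbf a\in\mathcal A^*: P_{\mathbf a}(i,i)>0\}$. *)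

theory Defs
  imports Complex_Main
begin

definition mmult :: "('g::finite \<Rightarrow> 'g \<Rightarrow> real) \<Rightarrow> ('g \<Rightarrow> 'g \<Rightarrow> real) \<Rightarrow> 'g \<Rightarrow> 'g \<Rightarrow> real" where
  "mmult M N i j = (\<Sum>k\<in>UNIV. M i k * N k j)"

definition stochastic :: "('g::finite \<Rightarrow> 'g \<Rightarrow> real) \<Rightarrow> bool" where
  "stochastic M \<longleftrightarrow> (\<forall>i j. 0 \<le> M i j) \<and> (\<forall>i. (\<Sum>j\<in>UNIV. M i j) = 1)"

definition G_stochastic_fun :: "nat set \<Rightarrow> (nat \<Rightarrow> 'g::finite \<Rightarrow> 'g \<Rightarrow> real) \<Rightarrow> bool" where
  "G_stochastic_fun A P \<longleftrightarrow> (\<forall>k\<in>A. stochastic (P k))"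

definition words :: "nat set \<Rightarrow> nat list set" where
  "words A = {w. w \<noteq> [] \<and> set w \<subseteq> A}"

text \<open>For a = [a1,...,an], word_mat P a = P(an) * ... * P(a1).\<close>
fun word_mat :: "(nat \<Rightarrow> 'g::finite \<Rightarrow> 'g \<Rightarrow> real) \<Rightarrow> nat list \<Rightarrow> 'g \<Rightarrow> 'g \<Rightarrow> real" where
  "word_mat P [] = (\<lambda>i j. if i = j then 1 else 0)"
| "word_mat P [a] = P a"
| "word_mat P (a # as) = mmult (word_mat P as) (P a)"

abbreviation depth :: "nat list \<Rightarrow> nat" where
  "depth w \<equiv> sum_list w"

definition irreducible_fun :: "nat set \<Rightarrow> (nat \<Rightarrow> 'g::finite \<Rightarrow> 'g \<Rightarrow> real) \<Rightarrow> bool" where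
  "irreducible_fun A P \<longleftrightarrow> (\<forall>i j. \<exists>w\<in>words A. word_mat P w i j > 0)"

definition period :: "nat set \<Rightarrow> (nat \<Rightarrow> 'g::finite \<Rightarrow> 'g \<Rightarrow> real) \<Rightarrow> 'g \<Rightarrow> nat" where
  "period A P i = Gcd (depth ` {w\<in>words A. word_mat P w i i > 0})"

end

theory Submission
  imports Defs "HOL-Number_Theory.Cong"
begin

text \<open>Fix a state \<open>i\<^sub>0\<close> and let \<open>d\<close> be its period. Concatenating a word from \<open>i\<close> to \<open>j\<close>
  with words through \<open>i\<^sub>0\<close> gives cycles at \<open>i\<close> and \<open>j\<close> whose depths differ by those of
  cycles at \<open>j\<close> and \<open>i\<close>; hence all periods divide each other and coincide. Assign to
  each state \<open>j\<close> the depth of some word from \<open>i\<^sub>0\<close> to \<open>j\<close>, taken mod \<open>d\<close>; closing such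
  words into cycles through \<open>i\<^sub>0\<close> shows that a word of depth \<open>n\<close> from \<open>i\<close> to \<open>j\<close> shifts the
  class by \<open>n\<close>. Every class is hit: the set of realised classes is nonempty and closed
  under shifts by letters (rows of stochastic matrices are nonzero), so \<open>gcd A = 1\<close>
  forces it to be all of \<open>\<int>/d\<close>.\<close>

lemma mmult_id_left: "mmult (\<lambda>i j. if i = j then 1 else 0) M = M"
  by (intro ext) (simp add: mmult_def if_distrib[of "\<lambda>x. x * _"] cong: if_cong)

lemma mmult_id_right: "mmult M (\<lambda>i j. if i = j then 1 else 0) = M"
  by (intro ext) (simp add: mmult_def if_distrib cong: if_cong)

lemma mmult_assoc: "mmult (mmult X Y) Z = mmult X (mmult Y Z)"
  unfolding mmult_def sum_distrib_left sum_distrib_right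
  by (intro ext) (subst sum.swap, simp add: mult.assoc)

lemma mmult_pos:
  assumes "\<And>i j. 0 \<le> X i j" "\<And>i j. 0 \<le> Y i j" "X i k > 0" "Y k j > 0"
  shows "mmult X Y i j > 0"
proof -
  have "X i k * Y k j \<le> (\<Sum>l\<in>UNIV. X i l * Y l j)"
    by (rule member_le_sum) (auto intro: mult_nonneg_nonneg assms)
  moreover have "X i k * Y k j > 0" using assms by simp
  ultimately show ?thesis unfolding mmult_def by linarith
qed

lemma stochastic_row_pos:
  assumes "stochastic M"
  obtains j where "M i j > 0"
proof -
  have "(\<Sum>j\<in>UNIV. M i j) = 1"
    using assms by (simp add: stochastic_def)
  then have "\<not> (\<forall>j. M i j = 0)"
    by (metis (no_types) sum.neutral zero_neq_one)
  then show ?thesis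
    using assms that by (force simp: stochastic_def less_eq_real_def)
qed

lemma word_mat_Cons: "word_mat P (a # as) = mmult (word_mat P as) (P a)"
  by (cases as) (auto simp: mmult_id_left)

lemma word_mat_append: "word_mat P (u @ v) = mmult (word_mat P v) (word_mat P u)"
  by (induction u) (simp_all add: mmult_id_right word_mat_Cons mmult_assoc)

lemma word_mat_nonneg:
  assumes "G_stochastic_fun A P" "set w \<subseteq> A"
  shows "0 \<le> word_mat P w i j"
  using assms(2)
proof (induction w arbitrary: i j)
  case (Cons a w)
  then have "\<And>i j. 0 \<le> P a i j"
    using assms(1) by (auto simp: G_stochastic_fun_def stochastic_def)
  then show ?case
    using Cons by (simp add: word_mat_Cons mmult_def sum_nonneg)
qed simp

text \<open>A set of naturals that is closed under addition and depends only on residues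
  mod \<open>d\<close> is a subgroup of \<open>\<int>/d\<close> in disguise, hence consists of the multiples of its
  least positive element.\<close>

lemma add_closed_mod_periodic_eq_multiples:
  fixes M :: "nat set"
  assumes "d > 0" "0 \<in> M"
    and add: "\<And>m n. m \<in> M \<Longrightarrow> n \<in> M \<Longrightarrow> m + n \<in> M"
    and periodic: "\<And>m n. n \<in> M \<Longrightarrow> m mod d = n mod d \<Longrightarrow> m \<in> M"
  obtains g where "g > 0" "M = {n. g dvd n}"
proof -
  have "d \<in> M" using periodic[OF \<open>0 \<in> M\<close>] by simp
  define g where "g = (LEAST n. 0 < n \<and> n \<in> M)"
  have g: "0 < g" "g \<in> M"
    using LeastI[of "\<lambda>n. 0 < n \<and> n \<in> M" d] \<open>d > 0\<close> \<open>d \<in> M\<close> by (auto simp: g_def)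
  have g_least: "g \<le> n" if "0 < n" "n \<in> M" for n
    unfolding g_def using that by (intro Least_le) simp
  have mult: "k * g \<in> M" for k
    by (induction k) (simp_all add: \<open>0 \<in> M\<close> add g)
  have "g dvd a" if a: "a \<in> M" for a
  proof -
    \<comment> \<open>\<open>a mod g \<equiv> a + (d - 1) (a div g) g\<close> modulo \<open>d\<close>, and the right-hand side lies in \<open>M\<close>\<close>
    have "a + (d - 1) * (a div g) * g = a mod g + d * (a div g * g)"
      using \<open>d > 0\<close> div_mult_mod_eq[of a g] by (cases d) (simp_all add: algebra_simps)
    then have "(a mod g) mod d = (a + (d - 1) * (a div g) * g) mod d"
      by simp
    then have "a mod g \<in> M"
      using periodic add[OF a mult[of "(d - 1) * (a div g)"]] by (simp add: mult.assoc)
    then have "a mod g = 0"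
      using g_least[of "a mod g"] mod_less_divisor[OF \<open>g > 0\<close>] by (meson gr0I leD)
    then show ?thesis by presburger
  qed
  then have "M = {n. g dvd n}"
    using mult by (auto simp: dvd_def mult.commute)
  then show ?thesis using g(1) that by blast
qed

lemma residues_shift_closed_eq_all:
  fixes S A :: "nat set"
  assumes "d > 0" "S \<noteq> {}" "S \<subseteq> {0..<d}" "Gcd A = 1"
    and shift: "\<And>r a. r \<in> S \<Longrightarrow> a \<in> A \<Longrightarrow> (r + a) mod d \<in> S"
  shows "S = {0..<d}"
proof -
  define M where "M = {n. \<forall>r\<in>S. (r + n) mod d \<in> S}"
  have "M = UNIV"
  proof (rule add_closed_mod_periodic_eq_multiples[of d M])
    show "0 \<in> M" using assms(3) by (auto simp: M_def)
    show "m + n \<in> M" if "m \<in> M" "n \<in> M" for m n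
    proof -
      have "(r + (m + n)) mod d = ((r + m) mod d + n) mod d" for r
        by (simp add: mod_add_left_eq add.assoc)
      then show ?thesis using that by (simp add: M_def)
    qed
    show "m \<in> M" if "n \<in> M" "m mod d = n mod d" for m n
      using that by (simp add: M_def) (metis mod_add_right_eq)
    fix g assume "M = {n. g dvd n}"
    moreover have "A \<subseteq> M" using shift by (auto simp: M_def)
    ultimately have "g dvd Gcd A" by (auto intro: Gcd_greatest)
    with \<open>M = {n. g dvd n}\<close> \<open>Gcd A = 1\<close> show ?thesis by simp
  qed (use \<open>d > 0\<close> in simp)
  obtain s where s: "s \<in> S" using assms(2) by blast
  have "t \<in> S" if "t < d" for t
  proof -
    have "(s + (d - s + t)) mod d \<in> S" using \<open>M = UNIV\<close> s by (auto simp: M_def)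
    moreover have "s + (d - s + t) = t + d" using s assms(3) by auto
    ultimately show ?thesis using that by simp
  qed
  then show ?thesis using assms(3) by auto
qed

definition reach :: "nat set \<Rightarrow> (nat \<Rightarrow> 'g::finite \<Rightarrow> 'g \<Rightarrow> real) \<Rightarrow> 'g \<Rightarrow> 'g \<Rightarrow> nat \<Rightarrow> bool" where
  "reach A P i j n \<longleftrightarrow> (\<exists>w\<in>words A. word_mat P w i j > 0 \<and> depth w = n)"

lemma period_eq_Gcd_reach: "period A P i = Gcd {n. reach A P i i n}"
proof -
  have "depth ` {w\<in>words A. word_mat P w i i > 0} = {n. reach A P i i n}"
    by (auto simp: reach_def)
  then show ?thesis by (simp add: period_def)
qed

lemma period_dvd_reach: "reach A P i i n \<Longrightarrow> period A P i dvd n"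
  by (simp add: period_eq_Gcd_reach Gcd_dvd)

lemma irreducible_fun_reach: "irreducible_fun A P \<Longrightarrow> \<exists>n. reach A P i j n"
  unfolding irreducible_fun_def reach_def by blast

lemma reach_trans:
  assumes "G_stochastic_fun A P" "reach A P i k n" "reach A P k j m"
  shows "reach A P i j (n + m)"
proof -
  obtain u where u: "u \<in> words A" "word_mat P u i k > 0" "depth u = n"
    using assms(2) by (auto simp: reach_def)
  obtain v where v: "v \<in> words A" "word_mat P v k j > 0" "depth v = m"
    using assms(3) by (auto simp: reach_def)
  have "word_mat P (v @ u) i j > 0"
    unfolding word_mat_append
    using u v by (intro mmult_pos word_mat_nonneg[OF assms(1)]) (auto simp: words_def)
  moreover have "v @ u \<in> words A" using u v by (auto simp: words_def)
  ultimately show ?thesis using u v by (auto simp: reach_def)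
qed

lemma reach_pos: "A \<subseteq> {0<..} \<Longrightarrow> reach A P i j n \<Longrightarrow> n > 0"
  by (auto simp: reach_def words_def neq_Nil_conv)

lemma reach_letter:
  assumes "G_stochastic_fun A P" "a \<in> A"
  obtains j where "reach A P i j a"
proof -
  have "stochastic (P a)"
    using assms by (simp add: G_stochastic_fun_def)
  then obtain j where "P a i j > 0"
    by (rule stochastic_row_pos)
  then have "reach A P i j a"
    unfolding reach_def using assms(2) by (intro bexI[of _ "[a]"]) (auto simp: words_def)
  then show ?thesis by (rule that)
qed

lemma period_dvd_period:
  assumes "G_stochastic_fun A P" "irreducible_fun A P"
  shows "period A P i dvd period A P j"
proof -
  obtain L L' where L: "reach A P i j L" and L': "reach A P j i L'"
    using irreducible_fun_reach[OF assms(2)] by blast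
  have "period A P i dvd c" if "reach A P j j c" for c
  proof -
    have "period A P i dvd L + c + L'"
      by (intro period_dvd_reach reach_trans[OF assms(1) reach_trans[OF assms(1) L that] L'])
    moreover have "period A P i dvd L + L'"
      by (intro period_dvd_reach reach_trans[OF assms(1) L L'])
    ultimately show ?thesis
      by (metis add.commute add.left_commute dvd_add_right_iff)
  qed
  then show ?thesis
    unfolding period_eq_Gcd_reach[of A P j] by (intro Gcd_greatest) simp
qed

lemma period_eq:
  "G_stochastic_fun A P \<Longrightarrow> irreducible_fun A P \<Longrightarrow> period A P i = period A P j"
  by (simp add: dvd_antisym period_dvd_period)

lemma period_pos:
  assumes "A \<subseteq> {0<..}" "irreducible_fun A P"
  shows "period A P i > 0"
proof -
  obtain c where c: "reach A P i i c"
    using irreducible_fun_reach[OF assms(2)] by blast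
  then show ?thesis
    using period_dvd_reach[OF c] reach_pos[OF assms(1) c] by (auto intro: gr0I)
qed

text \<open>By \<open>cyclic_class_reach\<close> the class does not depend on the word picked by \<open>SOME\<close>.\<close>

definition cyclic_class :: "nat set \<Rightarrow> (nat \<Rightarrow> 'g::finite \<Rightarrow> 'g \<Rightarrow> real) \<Rightarrow> 'g \<Rightarrow> 'g \<Rightarrow> nat" where
  "cyclic_class A P i\<^sub>0 j = (SOME n. reach A P i\<^sub>0 j n) mod period A P i\<^sub>0"

lemma cyclic_class_reach:
  assumes "G_stochastic_fun A P" "irreducible_fun A P" "reach A P i j n"
  shows "cyclic_class A P i\<^sub>0 j = (cyclic_class A P i\<^sub>0 i + n) mod period A P i\<^sub>0"
proof -
  define d where "d = period A P i\<^sub>0"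
  define len where "len k = (SOME n. reach A P i\<^sub>0 k n)" for k
  have len: "reach A P i\<^sub>0 k (len k)" for k
    unfolding len_def by (rule someI_ex) (rule irreducible_fun_reach[OF assms(2)])
  obtain m where m: "reach A P j i\<^sub>0 m"
    using irreducible_fun_reach[OF assms(2)] by blast
  have "[len j + m = 0] (mod d)"
    unfolding d_def cong_0_iff by (intro period_dvd_reach reach_trans[OF assms(1) len m])
  moreover have "[len i + n + m = 0] (mod d)"
    unfolding d_def cong_0_iff
    by (intro period_dvd_reach reach_trans[OF assms(1) reach_trans[OF assms(1) len assms(3)] m])
  ultimately have "[len j = len i + n] (mod d)"
    by (meson cong_add_rcancel_nat cong_sym cong_trans)
  then show ?thesis
    by (simp add: cyclic_class_def len_def[symmetric] d_def[symmetric] cong_def mod_add_left_eq)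
qed

theorem mainTheorem4:
  fixes A :: "nat set" and P :: "nat \<Rightarrow> 'g::finite \<Rightarrow> 'g \<Rightarrow> real"
  assumes "A \<subseteq> {0<..}"
    and "G_stochastic_fun A P"
    and "irreducible_fun A P"
    and "Gcd A = 1"
  shows "\<exists>d::nat. d > 0 \<and> (\<forall>i. period A P i = d) \<and>
    (\<exists>part :: 'g \<Rightarrow> nat. part ` UNIV = {0..<d} \<and>
       (\<forall>b\<in>words A. \<forall>i j. word_mat P b i j > 0 \<longrightarrow> part j = (part i + depth b) mod d))"
proof -
  fix i\<^sub>0 :: 'g
  define d where "d = period A P i\<^sub>0"
  define part where "part = cyclic_class A P i\<^sub>0"
  have "d > 0" unfolding d_def using period_pos[OF assms(1,3)] .
  have shift: "reach A P i j n \<Longrightarrow> part j = (part i + n) mod d" for i j n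
    unfolding part_def d_def using cyclic_class_reach[OF assms(2,3)] .
  have "range part = {0..<d}"
  proof (rule residues_shift_closed_eq_all[OF \<open>d > 0\<close> _ _ assms(4)])
    show "range part \<subseteq> {0..<d}"
      using \<open>d > 0\<close> by (auto simp: part_def d_def cyclic_class_def)
    show "(r + a) mod d \<in> range part" if "r \<in> range part" "a \<in> A" for r a
      using that reach_letter[OF assms(2)] shift by (metis imageE rangeI)
  qed simp
  moreover have "\<forall>i. period A P i = d"
    unfolding d_def using period_eq[OF assms(2,3)] by blast
  moreover have "\<forall>b\<in>words A. \<forall>i j. word_mat P b i j > 0 \<longrightarrow> part j = (part i + depth b) mod d"
    using shift by (auto simp: reach_def)
  ultimately show ?thesis using \<open>d > 0\<close> by blast
qed

end
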